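(* Let $d\geq 1$, let $p_1<\dots<p_d$ be the first $d$ prime numbers, let $N\geq 1$ be an integer, let $C>1$ and $\varepsilon\in\mathbb{R}$. Let $\mathbf{A}_1$ be the $(d+1)\times(d+1)$ matrix whose $i$-th column ($1\le i\le d$) has entry $\ln p_i$ in row $i$, entry $C\ln p_i$ in row $d+1$ and zeros elsewhere, and whose last column is $(0,\dots,0,C\ln N)^T$. Let $\mathbf{z}\in\mathbb{Z}^{d+1}$ with $z_{d+1}<0$, put $\gamma=|z_{d+1}|\geq 1$, $$u=\prod_{1\le i\le d,\ z_i>0}p_i^{z_i},\qquad k=\prod_{1\le i\le d,\ z_i<0}p_i^{-z_i},$$ and suppose $\|\mathbf{A}_1\mathbf{z}\|_1\leq\varepsilon$. Then $$|u-kN^\gamma|\leq\frac{N^{\gamma/2}}{C}\exp\left(\frac{\varepsilon}{2}\right).$$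
   Context: $\ln$ is the natural logarithm, $\|\cdot\|_1$ the $\ell^1$ norm; empty products equal $1$. *)

theory Defs
  imports "HOL-Analysis.Analysis" "HOL-Computational_Algebra.Primes"
begin

text \<open>The i-th prime number, 1-indexed: pr 1 = 2, pr 2 = 3, ...\<close>
definition pr :: "nat \<Rightarrow> nat" where
  "pr i = enumerate {p::nat. prime p} (i - 1)"

definition A1 :: "nat \<Rightarrow> real \<Rightarrow> nat \<Rightarrow> nat \<Rightarrow> nat \<Rightarrow> real" where
  "A1 d C N r c =
     (if c \<le> d then
        (if r = c then ln (real (pr c)) else if r = d + 1 then C * ln (real (pr c)) else 0)
      else (if r = d + 1 then C * ln (real N) else 0))"

definition mat_vec :: "nat \<Rightarrow> (nat \<Rightarrow> nat \<Rightarrow> real) \<Rightarrow> (nat \<Rightarrow> real) \<Rightarrow> nat \<Rightarrow> real" where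
  "mat_vec n M x r = (\<Sum>c=1..n. M r c * x c)"

definition l1_norm :: "nat \<Rightarrow> (nat \<Rightarrow> real) \<Rightarrow> real" where
  "l1_norm n x = (\<Sum>r=1..n. \<bar>x r\<bar>)"

end

theory Submission imports Defs begin

text \<open>Put \<open>a = ln u\<close> and \<open>b = ln (k N^\<gamma>)\<close>. The first \<open>d\<close> rows of \<open>A\<^sub>1 z\<close> contribute
  \<open>ln u + ln k\<close> to the \<open>\<ell>\<^sup>1\<close> norm and the last row contributes \<open>C \<bar>a - b\<bar>\<close>, so
  \<open>a + b + C \<bar>a - b\<bar> \<le> \<epsilon> + \<gamma> ln N\<close>. With \<open>s = \<bar>a - b\<bar> / 2\<close> one has
  \<open>\<bar>exp a - exp b\<bar> = exp ((a + b) / 2) (exp s - exp (-s))\<close>, and the elementary inequality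
  \<open>C (exp s - exp (-s)) \<le> exp (C s)\<close> turns this into the claimed bound.\<close>

lemma exp_le_chord:
  assumes "0 \<le> s" "s \<le> (1::real)"
  shows "exp s \<le> 1 + (exp 1 - 1) * s"
proof -
  have "exp ((1 - s) *\<^sub>R 0 + s *\<^sub>R 1) \<le> (1 - s) * exp 0 + s * exp 1"
    using convex_onD[OF exp_convex, of s 0 1] assms by auto
  thus ?thesis by (simp add: algebra_simps)
qed

lemma mult_exp_diff_le_exp:
  fixes C s :: real
  assumes "C \<ge> 1" "s \<ge> 0"
  shows "C * (exp s - exp (- s)) \<le> exp (C * s)"
proof (cases "s \<ge> 1")
  case True
  have "C - 1 \<le> (C - 1) * s" using mult_left_mono[of 1 s "C - 1"] True assms by simp
  moreover have "1 + (C - 1) * s \<le> exp ((C - 1) * s)" by (rule exp_ge_add_one_self)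
  ultimately have "C \<le> exp ((C - 1) * s)" by linarith
  hence "C * exp s \<le> exp ((C - 1) * s) * exp s" by simp
  also have "\<dots> = exp (C * s)" by (simp add: exp_add[symmetric] algebra_simps)
  finally have "C * exp s \<le> exp (C * s)" .
  moreover have "0 \<le> C * exp (- s)" using assms by simp
  ultimately show ?thesis unfolding right_diff_distrib by linarith
next
  case False
  have "exp s - exp (- s) \<le> (1 + (exp 1 - 1) * s) - (1 - s)"
    using exp_le_chord[of s] exp_ge_add_one_self[of "- s"] False assms by simp
  hence "C * (exp s - exp (- s)) \<le> C * (exp 1 * s)"
    using assms by (intro mult_left_mono) (simp_all add: algebra_simps)
  also have "\<dots> \<le> exp 1 * exp (C * s - 1)"
    using exp_ge_add_one_self[of "C * s - 1"] by simp
  also have "\<dots> = exp (C * s)" by (simp add: exp_diff)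
  finally show ?thesis .
qed

lemma abs_exp_diff_eq:
  fixes a b :: real
  shows "\<bar>exp a - exp b\<bar> = exp ((a + b) / 2) * (exp (\<bar>a - b\<bar> / 2) - exp (- (\<bar>a - b\<bar> / 2)))"
proof -
  define t where "t = (a - b) / 2"
  have "exp a = exp ((a + b) / 2) * exp t" "exp b = exp ((a + b) / 2) * exp (- t)"
    by (simp_all add: t_def exp_add[symmetric] field_simps)
  moreover have "\<bar>exp t - exp (- t)\<bar> = exp \<bar>t\<bar> - exp (- \<bar>t\<bar>)"
    by (cases "t \<ge> 0") auto
  ultimately show ?thesis
    by (simp add: t_def abs_mult right_diff_distrib[symmetric])
qed

lemma abs_exp_diff_le:
  fixes a b C :: real
  assumes "C \<ge> 1"
  shows "\<bar>exp a - exp b\<bar> \<le> exp ((a + b + C * \<bar>a - b\<bar>) / 2) / C"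
proof -
  define s where "s = \<bar>a - b\<bar> / 2"
  have "s \<ge> 0" by (simp add: s_def)
  have "\<bar>exp a - exp b\<bar> = exp ((a + b) / 2) * (exp s - exp (- s))"
    unfolding s_def by (rule abs_exp_diff_eq)
  also have "\<dots> \<le> exp ((a + b) / 2) * (exp (C * s) / C)"
    using mult_exp_diff_le_exp[OF assms \<open>s \<ge> 0\<close>] assms
    by (intro mult_left_mono) (simp_all add: pos_le_divide_eq mult.commute)
  also have "\<dots> = exp ((a + b + C * \<bar>a - b\<bar>) / 2) / C"
    by (simp add: s_def exp_add[symmetric] add_divide_distrib)
  finally show ?thesis .
qed

lemma pr_prime: "prime (pr i)"
  unfolding pr_def using enumerate_in_set[OF primes_infinite] by simp

lemma pr_pos: "pr i > 0"
  using prime_gt_0_nat[OF pr_prime] .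

lemma ln_pr_pos: "ln (real (pr i)) > 0"
  using prime_gt_1_nat[OF pr_prime[of i]] by simp

lemma mat_vec_A1_row:
  assumes "r \<in> {1..d}"
  shows "mat_vec (d + 1) (A1 d C N) x r = ln (real (pr r)) * x r"
proof -
  have "mat_vec (d + 1) (A1 d C N) x r = (\<Sum>c\<in>{1..d + 1}. if c = r then ln (real (pr r)) * x r else 0)"
    unfolding mat_vec_def by (rule sum.cong) (use assms in \<open>auto simp: A1_def\<close>)
  thus ?thesis using assms by simp
qed

lemma mat_vec_A1_last:
  "mat_vec (d + 1) (A1 d C N) x (d + 1)
     = C * ((\<Sum>c=1..d. ln (real (pr c)) * x c) + ln (real N) * x (d + 1))"
proof -
  have "(\<Sum>c=1..d. A1 d C N (d + 1) c * x c) = C * (\<Sum>c=1..d. ln (real (pr c)) * x c)"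
    unfolding sum_distrib_left by (rule sum.cong) (auto simp: A1_def)
  thus ?thesis by (simp add: mat_vec_def A1_def algebra_simps)
qed

lemma l1_norm_A1:
  "l1_norm (d + 1) (mat_vec (d + 1) (A1 d C N) x)
     = (\<Sum>i=1..d. ln (real (pr i)) * \<bar>x i\<bar>)
       + \<bar>C * ((\<Sum>i=1..d. ln (real (pr i)) * x i) + ln (real N) * x (d + 1))\<bar>"
proof -
  have "\<bar>mat_vec (d + 1) (A1 d C N) x i\<bar> = ln (real (pr i)) * \<bar>x i\<bar>" if "i \<in> {1..d}" for i
    using mat_vec_A1_row[OF that] ln_pr_pos[of i] by (simp add: abs_mult)
  hence rows: "(\<Sum>i=1..d. \<bar>mat_vec (d + 1) (A1 d C N) x i\<bar>) = (\<Sum>i=1..d. ln (real (pr i)) * \<bar>x i\<bar>)"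
    by (rule sum.cong[OF refl])
  have last_row: "l1_norm (d + 1) y = (\<Sum>i=1..d. \<bar>y i\<bar>) + \<bar>y (d + 1)\<bar>" for y
    unfolding l1_norm_def by simp
  show ?thesis unfolding last_row rows mat_vec_A1_last by (rule refl)
qed

lemma ln_prod_pos_powers:
  fixes p :: "'a \<Rightarrow> nat" and w :: "'a \<Rightarrow> int"
  assumes "finite I" "\<And>i. i \<in> I \<Longrightarrow> p i > 0"
  shows "ln (real (\<Prod>i\<in>{i\<in>I. w i > 0}. p i ^ nat (w i)))
           = (\<Sum>i\<in>I. ln (real (p i)) * of_int (max (w i) 0))"
proof -
  have "ln (real (\<Prod>i\<in>{i\<in>I. w i > 0}. p i ^ nat (w i)))
          = (\<Sum>i\<in>{i\<in>I. w i > 0}. ln (real (p i) ^ nat (w i)))"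
    unfolding of_nat_prod of_nat_power using assms by (subst ln_prod) auto
  also have "\<dots> = (\<Sum>i\<in>{i\<in>I. w i > 0}. ln (real (p i)) * of_int (max (w i) 0))"
    by (rule sum.cong) (auto simp: ln_realpow)
  also have "\<dots> = (\<Sum>i\<in>I. ln (real (p i)) * of_int (max (w i) 0))"
    using assms(1) by (intro sum.mono_neutral_left) auto
  finally show ?thesis .
qed

lemma l1_norm_A1_of_int:
  fixes d :: nat and z :: "nat \<Rightarrow> int"
  defines "u \<equiv> (\<Prod>i\<in>{i\<in>{1..d}. z i > 0}. pr i ^ nat (z i))"
    and "k \<equiv> (\<Prod>i\<in>{i\<in>{1..d}. z i < 0}. pr i ^ nat (- z i))"
  shows "l1_norm (d + 1) (mat_vec (d + 1) (A1 d C N) (\<lambda>i. real_of_int (z i)))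
           = ln (real u) + ln (real k)
             + \<bar>C * (ln (real u) - ln (real k) + ln (real N) * of_int (z (d + 1)))\<bar>"
proof -
  have ln_u: "ln (real u) = (\<Sum>i=1..d. ln (real (pr i)) * of_int (max (z i) 0))"
    unfolding u_def using pr_pos by (intro ln_prod_pos_powers) auto
  have ln_k: "ln (real k) = (\<Sum>i=1..d. ln (real (pr i)) * of_int (max (- z i) 0))"
    using ln_prod_pos_powers[of "{1..d}" pr "\<lambda>i. - z i"] pr_pos by (simp add: k_def)
  have "(\<Sum>i=1..d. ln (real (pr i)) * \<bar>of_int (z i)\<bar>) = ln (real u) + ln (real k)"
    unfolding ln_u ln_k sum.distrib[symmetric] by (rule sum.cong) (auto simp: max_def)
  moreover have "(\<Sum>i=1..d. ln (real (pr i)) * of_int (z i)) = ln (real u) - ln (real k)"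
    unfolding ln_u ln_k sum_subtractf[symmetric] by (rule sum.cong) (auto simp: max_def)
  ultimately show ?thesis unfolding l1_norm_A1 by (simp only:)
qed

theorem lemma1:
  fixes d N :: nat and C \<epsilon> :: real and z :: "nat \<Rightarrow> int"
  assumes "d \<ge> 1" and "N \<ge> 1" and "C > 1"
    and "z (d + 1) < 0"
    and "l1_norm (d + 1) (mat_vec (d + 1) (A1 d C N) (\<lambda>i. real_of_int (z i))) \<le> \<epsilon>"
  shows "let \<gamma> = nat \<bar>z (d + 1)\<bar>;
             u = (\<Prod>i\<in>{i\<in>{1..d}. z i > 0}. pr i ^ nat (z i));
             k = (\<Prod>i\<in>{i\<in>{1..d}. z i < 0}. pr i ^ nat (- z i))
         in \<bar>real u - real k * real N ^ \<gamma>\<bar>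
              \<le> real N powr (real \<gamma> / 2) / C * exp (\<epsilon> / 2)"
proof -
  define \<gamma> where "\<gamma> = nat \<bar>z (d + 1)\<bar>"
  define u where "u = (\<Prod>i\<in>{i\<in>{1..d}. z i > 0}. pr i ^ nat (z i))"
  define k where "k = (\<Prod>i\<in>{i\<in>{1..d}. z i < 0}. pr i ^ nat (- z i))"
  define a where "a = ln (real u)"
  define b where "b = ln (real k) + real \<gamma> * ln (real N)"
  have "l1_norm (d + 1) (mat_vec (d + 1) (A1 d C N) (\<lambda>i. real_of_int (z i)))
          = ln (real u) + ln (real k)
            + \<bar>C * (ln (real u) - ln (real k) + ln (real N) * of_int (z (d + 1)))\<bar>"
    unfolding u_def k_def by (rule l1_norm_A1_of_int)
  also have "ln (real u) - ln (real k) + ln (real N) * of_int (z (d + 1)) = a - b"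
    using assms(4) by (simp add: a_def b_def \<gamma>_def algebra_simps)
  also have "ln (real u) + ln (real k) + \<bar>C * (a - b)\<bar> = a + ln (real k) + C * \<bar>a - b\<bar>"
    using assms(3) by (simp add: a_def abs_mult)
  finally have "l1_norm (d + 1) (mat_vec (d + 1) (A1 d C N) (\<lambda>i. real_of_int (z i)))
                  = a + ln (real k) + C * \<bar>a - b\<bar>" .
  hence "a + b + C * \<bar>a - b\<bar> \<le> \<epsilon> + real \<gamma> * ln (real N)"
    using assms(5) by (simp add: a_def b_def algebra_simps)
  hence "exp ((a + b + C * \<bar>a - b\<bar>) / 2) / C \<le> exp ((\<epsilon> + real \<gamma> * ln (real N)) / 2) / C"
    using assms(3) by (intro divide_right_mono) simp_all
  moreover have "exp a = real u" "exp b = real k * real N ^ \<gamma>"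
    using pr_pos assms(2) by (auto simp: a_def b_def u_def k_def exp_add exp_of_nat_mult prod_pos)
  ultimately have "\<bar>real u - real k * real N ^ \<gamma>\<bar> \<le> exp ((\<epsilon> + real \<gamma> * ln (real N)) / 2) / C"
    using abs_exp_diff_le[of C a b] assms(3) by simp
  also have "\<dots> = real N powr (real \<gamma> / 2) / C * exp (\<epsilon> / 2)"
    using assms(2) by (simp add: powr_def exp_add[symmetric] add_divide_distrib)
  finally show ?thesis unfolding Let_def \<gamma>_def u_def k_def .
qed

end
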